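(* Let $\Phi=(V,C)$ be a CNF formula in which every clause contains at least $k_1$ and at most $k_2$ variables, and every variable belongs to at most $d$ clauses. Let $s\ge k_2$. If $2^{k_1}\ge 2\mathrm{e}ds$, then $\Phi$ has a satisfying assignment, and for every $v\in V$, $$\max\left\{\Pr_{X\sim\mu}[X(v)=0],\ \Pr_{X\sim\mu}[X(v)=1]\right\}\le \frac12\exp\left(\frac1s\right),$$ where $\mu$ is the uniform distribution over all satisfying assignments of $\Phi$.
   Context: A CNF formula $\Phi=(V,C)$ has a set $V$ of Boolean variables and a set $C$ of clauses; each clause is a disjunction of literals on distinct variables (no clause contains both $x$ and $\neg x$). The number of variables of a clause $c$ is $|\mathsf{vbl}(c)|$, where $\mathsf{vbl}(c)$ is the set of variables appearing in $c$. *)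

theory Defs
  imports "HOL-Probability.Probability"
begin

text \<open>A literal is a pair (x, b): the literal is x if b = True and the negation of x if b = False.
  A clause is a finite set of literals on distinct variables.\<close>
type_synonym 'v lit = "'v \<times> bool"

definition vbl :: "'v lit set \<Rightarrow> 'v set" where
  "vbl c = fst ` c"

definition cnf_formula :: "'v set \<Rightarrow> 'v lit set set \<Rightarrow> bool" where
  "cnf_formula V C \<longleftrightarrow> finite V \<and> finite C \<and>
     (\<forall>c\<in>C. finite c \<and> vbl c \<subseteq> V \<and> inj_on fst c)"

definition clause_sat :: "('v \<Rightarrow> bool) \<Rightarrow> 'v lit set \<Rightarrow> bool" where
  "clause_sat \<sigma> c \<longleftrightarrow> (\<exists>(x, b)\<in>c. \<sigma> x = b)"

text \<open>Satisfying assignments V \<rightarrow> {False, True} (False = 0, True = 1), as extensional functions.\<close>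
definition sat_assignments :: "'v set \<Rightarrow> 'v lit set set \<Rightarrow> ('v \<Rightarrow> bool) set" where
  "sat_assignments V C = {\<sigma> \<in> V \<rightarrow>\<^sub>E (UNIV :: bool set). \<forall>c\<in>C. clause_sat \<sigma> c}"

definition uniform_sat :: "'v set \<Rightarrow> 'v lit set set \<Rightarrow> ('v \<Rightarrow> bool) pmf" where
  "uniform_sat V C = pmf_of_set (sat_assignments V C)"

end

theory Submission
  imports Defs
begin

text \<open>
  A counting form of the Lovasz Local Lemma with the uniform weight x = 1/(2ds). Write N(S)
  for the number of assignments satisfying the clauses in S. The key inequality
  N(S \<union> {c}) \<ge> (1 - x) N(S) is proved by strong induction on |S|: an assignment counted by
  N(S) that falsifies c is in particular counted by N(S'), where S' drops the clauses sharing a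
  variable with c; since S' and c are independent, the falsifying ones form a 2^-|c| fraction of
  N(S'), and by induction N(S') \<le> (1 - x)^-|S - S'| N(S). Iterating gives
  N(C) \<ge> (1 - x)^|C| 2^|V| > 0. Running the same argument for the unit clause that forbids
  X(v) = b bounds that marginal by (1 - x)^-d / 2 \<le> exp(1/s) / 2.
\<close>

lemma card_PiE_split:
  assumes "U \<subseteq> V"
    and E_local: "\<And>\<sigma>. E \<sigma> = E (restrict \<sigma> U)"
    and F_local: "\<And>\<sigma>. F \<sigma> = F (restrict \<sigma> (V - U))"
  shows "card {\<sigma> \<in> V \<rightarrow>\<^sub>E B. E \<sigma> \<and> F \<sigma>}
    = card {\<tau> \<in> U \<rightarrow>\<^sub>E B. E \<tau>} * card {\<tau> \<in> (V - U) \<rightarrow>\<^sub>E B. F \<tau>}"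
proof -
  let ?split = "\<lambda>\<sigma>. (restrict \<sigma> U, restrict \<sigma> (V - U))"
  let ?A = "{\<sigma> \<in> V \<rightarrow>\<^sub>E B. E \<sigma> \<and> F \<sigma>}"
  let ?A' = "{\<tau> \<in> U \<rightarrow>\<^sub>E B. E \<tau>} \<times> {\<tau> \<in> (V - U) \<rightarrow>\<^sub>E B. F \<tau>}"
  have UV: "U \<union> (V - U) = V" "U \<inter> (V - U) = {}"
    using assms(1) by auto
  have "\<forall>\<sigma>\<in>?A. merge U (V - U) (?split \<sigma>) = \<sigma>"
    using UV by (simp add: PiE_iff extensional_restrict)
  moreover have "\<forall>p\<in>?A'. ?split (merge U (V - U) p) = p"
    using UV by (auto simp: PiE_iff extensional_restrict)
  moreover have "?split ` ?A \<subseteq> ?A'"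
    using E_local F_local assms(1) by (auto simp: PiE_iff)
  moreover have "merge U (V - U) p \<in> ?A" if p_in: "p \<in> ?A'" for p
  proof -
    obtain a b where p: "p = (a, b)"
      and a: "a \<in> U \<rightarrow>\<^sub>E B" "E a" and b: "b \<in> (V - U) \<rightarrow>\<^sub>E B" "F b"
      using p_in by (cases p) auto
    have "merge U (V - U) (a, b) \<in> V \<rightarrow>\<^sub>E B"
      using PiE_cancel_merge[OF UV(2), of a b "\<lambda>_. B"] UV a b by (simp add: PiE_iff)
    moreover have "E (merge U (V - U) (a, b))"
      using UV a E_local by (metis PiE_restrict restrict_merge(1))
    moreover have "F (merge U (V - U) (a, b))"
      using UV b F_local by (metis PiE_restrict restrict_merge(2))
    ultimately show ?thesis
      using p by simp
  qed
  then have "merge U (V - U) ` ?A' \<subseteq> ?A"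
    by blast
  ultimately have "bij_betw ?split ?A ?A'"
    by (rule bij_betw_byWitness)
  then show ?thesis
    by (simp add: bij_betw_same_card card_cartesian_product)
qed

lemma clause_sat_restrict:
  assumes "vbl c \<subseteq> U"
  shows "clause_sat (restrict \<sigma> U) c \<longleftrightarrow> clause_sat \<sigma> c"
proof -
  have "restrict \<sigma> U (fst p) = \<sigma> (fst p)" if "p \<in> c" for p
    using assms that by (auto simp: vbl_def)
  then show ?thesis
    unfolding clause_sat_def case_prod_beta by (intro bex_cong) auto
qed

lemma card_falsifying_le_1:
  "card {\<tau> \<in> vbl c \<rightarrow>\<^sub>E (UNIV :: bool set). \<not> clause_sat \<tau> c} \<le> 1"
proof -
  let ?A = "{\<tau> \<in> vbl c \<rightarrow>\<^sub>E (UNIV :: bool set). \<not> clause_sat \<tau> c}"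
  have "\<tau>1 x = \<tau>2 x" if \<tau>: "\<tau>1 \<in> ?A" "\<tau>2 \<in> ?A" for \<tau>1 \<tau>2 x
  proof (cases "x \<in> vbl c")
    case True
    then obtain b where "(x, b) \<in> c"
      by (auto simp: vbl_def)
    then have "\<tau>1 x \<noteq> b" "\<tau>2 x \<noteq> b"
      using \<tau> unfolding clause_sat_def by blast+
    then show ?thesis
      by simp
  next
    case False
    have "\<tau>1 \<in> vbl c \<rightarrow>\<^sub>E UNIV" "\<tau>2 \<in> vbl c \<rightarrow>\<^sub>E UNIV"
      using \<tau> by simp_all
    then show ?thesis
      using False PiE_arb by metis
  qed
  then have "\<forall>\<tau>1\<in>?A. \<forall>\<tau>2\<in>?A. \<tau>1 = \<tau>2"
    by (simp add: fun_eq_iff)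
  then show ?thesis
    by (cases "finite ?A") (simp_all add: card_le_Suc0_iff_eq)
qed

lemma card_falsifying_independent_le:
  assumes "finite V" "vbl c \<subseteq> V" "\<forall>c'\<in>S. vbl c' \<subseteq> V - vbl c"
  shows "card {\<sigma> \<in> sat_assignments V S. \<not> clause_sat \<sigma> c} * 2 ^ card (vbl c)
    \<le> card (sat_assignments V S)"
proof -
  let ?sat_S = "\<lambda>\<sigma>. \<forall>c'\<in>S. clause_sat \<sigma> c'"
  let ?rest = "card {\<tau> \<in> (V - vbl c) \<rightarrow>\<^sub>E (UNIV :: bool set). ?sat_S \<tau>}"
  have sat_S_local: "?sat_S \<sigma> = ?sat_S (restrict \<sigma> (V - vbl c))" for \<sigma>
    using assms(3) clause_sat_restrict[of _ "V - vbl c" \<sigma>] by auto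
  have falsify_local: "(\<not> clause_sat \<sigma> c) = (\<not> clause_sat (restrict \<sigma> (vbl c)) c)" for \<sigma>
    by (simp add: clause_sat_restrict)
  have "{\<sigma> \<in> sat_assignments V S. \<not> clause_sat \<sigma> c}
      = {\<sigma> \<in> V \<rightarrow>\<^sub>E UNIV. \<not> clause_sat \<sigma> c \<and> ?sat_S \<sigma>}"
    by (auto simp: sat_assignments_def)
  then have "card {\<sigma> \<in> sat_assignments V S. \<not> clause_sat \<sigma> c}
      = card {\<tau> \<in> vbl c \<rightarrow>\<^sub>E (UNIV :: bool set). \<not> clause_sat \<tau> c} * ?rest"
    using card_PiE_split[where E = "\<lambda>\<sigma>. \<not> clause_sat \<sigma> c" and F = ?sat_S and B = UNIV,
      OF assms(2) falsify_local sat_S_local]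
    by simp
  also have "\<dots> \<le> ?rest"
    using mult_le_mono1[OF card_falsifying_le_1[of c]] by simp
  finally have "card {\<sigma> \<in> sat_assignments V S. \<not> clause_sat \<sigma> c} \<le> ?rest" .
  moreover have "card (sat_assignments V S) = 2 ^ card (vbl c) * ?rest"
  proof -
    have "sat_assignments V S = {\<sigma> \<in> V \<rightarrow>\<^sub>E UNIV. True \<and> ?sat_S \<sigma>}"
      by (simp add: sat_assignments_def)
    moreover have "card {\<tau> \<in> vbl c \<rightarrow>\<^sub>E (UNIV :: bool set). True} = 2 ^ card (vbl c)"
      using assms(1,2) by (simp add: card_PiE finite_subset)
    ultimately show ?thesis
      using card_PiE_split[where E = "\<lambda>_. True" and F = ?sat_S and B = UNIV,
          OF assms(2) _ sat_S_local]
      by simp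
  qed
  ultimately show ?thesis
    by simp
qed

lemma power_card_mult_le_union:
  fixes f :: "'a set \<Rightarrow> real"
  assumes "0 \<le> q"
    and step: "\<And>T a. T \<subseteq> A \<Longrightarrow> a \<in> A - T \<Longrightarrow> q * f T \<le> f (insert a T)"
    and "finite R" "T \<union> R \<subseteq> A" "T \<inter> R = {}"
  shows "q ^ card R * f T \<le> f (T \<union> R)"
  using assms(3-5)
proof (induction R rule: finite_induct)
  case empty
  then show ?case
    by simp
next
  case (insert a R)
  have "q ^ card (insert a R) * f T = q * (q ^ card R * f T)"
    using insert by simp
  also have "\<dots> \<le> q * f (T \<union> R)"
    using insert assms(1) by (intro mult_left_mono) auto
  also have "\<dots> \<le> f (insert a (T \<union> R))"
    using insert by (intro step) auto
  finally show ?case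
    by simp
qed

definition clauses_touching :: "'v lit set set \<Rightarrow> 'v set \<Rightarrow> 'v lit set set" where
  "clauses_touching S U = {c \<in> S. vbl c \<inter> U \<noteq> {}}"

definition lll_condition :: "'v lit set set \<Rightarrow> real \<Rightarrow> bool" where
  "lll_condition C x \<longleftrightarrow>
     (\<forall>c\<in>C. 1 / 2 ^ card (vbl c) \<le> x * (1 - x) ^ card (clauses_touching (C - {c}) (vbl c)))"

lemma finite_sat_assignments: "finite V \<Longrightarrow> finite (sat_assignments V S)"
  unfolding sat_assignments_def by (simp add: finite_PiE)

lemma card_falsifying_le_touching:
  fixes x :: real
  assumes "finite V" "vbl c \<subseteq> V" "finite S" "\<forall>c'\<in>S. vbl c' \<subseteq> V" "0 \<le> x" "x \<le> 1"
    and step: "\<And>T c'. T \<subseteq> S \<Longrightarrow> c' \<in> S - T \<Longrightarrow>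
      (1 - x) * card (sat_assignments V T) \<le> card (sat_assignments V (insert c' T))"
  shows "card {\<sigma> \<in> sat_assignments V S. \<not> clause_sat \<sigma> c} * 2 ^ card (vbl c)
      * (1 - x) ^ card (clauses_touching S (vbl c)) \<le> card (sat_assignments V S)"
proof -
  define S1 where "S1 = clauses_touching S (vbl c)"
  define S2 where "S2 = S - S1"
  let ?bad = "\<lambda>T. {\<sigma> \<in> sat_assignments V T. \<not> clause_sat \<sigma> c}"
  have "card (?bad S) \<le> card (?bad S2)"
    using assms(1) by (intro card_mono) (auto simp: S2_def sat_assignments_def finite_PiE)
  then have "card (?bad S) * 2 ^ card (vbl c) \<le> card (?bad S2) * 2 ^ card (vbl c)"
    by (rule mult_le_mono1)
  also have "\<dots> \<le> card (sat_assignments V S2)"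
    using assms(1,2,4)
    by (intro card_falsifying_independent_le) (auto simp: S1_def S2_def clauses_touching_def)
  finally have "real (card (?bad S) * 2 ^ card (vbl c)) \<le> card (sat_assignments V S2)"
    by (rule of_nat_mono)
  then have "card (?bad S) * 2 ^ card (vbl c) * (1 - x) ^ card S1
      \<le> card (sat_assignments V S2) * (1 - x) ^ card S1"
    using assms(6) by (intro mult_right_mono) simp_all
  also have "\<dots> \<le> card (sat_assignments V (S2 \<union> S1))"
    using assms(3,5,6) step
    by (subst mult.commute, intro power_card_mult_le_union[where A = S])
      (auto simp: S1_def S2_def clauses_touching_def)
  also have "S2 \<union> S1 = S"
    by (auto simp: S1_def S2_def clauses_touching_def)
  finally show ?thesis
    by (simp add: S1_def)
qed

lemma card_sat_assignments_insert_add: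
  assumes "finite V"
  shows "card (sat_assignments V S)
    = card (sat_assignments V (insert c S)) + card {\<sigma> \<in> sat_assignments V S. \<not> clause_sat \<sigma> c}"
proof -
  have "card (sat_assignments V S) = card (sat_assignments V S \<inter> {\<sigma>. clause_sat \<sigma> c})
      + card (sat_assignments V S - {\<sigma>. clause_sat \<sigma> c})"
    using assms by (intro card_Int_Diff finite_sat_assignments)
  also have "sat_assignments V S \<inter> {\<sigma>. clause_sat \<sigma> c} = sat_assignments V (insert c S)"
    by (auto simp: sat_assignments_def)
  also have "sat_assignments V S - {\<sigma>. clause_sat \<sigma> c} = {\<sigma> \<in> sat_assignments V S. \<not> clause_sat \<sigma> c}"
    by auto
  finally show ?thesis .
qed

lemma lll_condition_touching_subset:
  fixes x :: real
  assumes "lll_condition C x" "0 \<le> x" "x \<le> 1" "finite C" "c \<in> C" "S \<subseteq> C - {c}"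
  shows "1 / 2 ^ card (vbl c) \<le> x * (1 - x) ^ card (clauses_touching S (vbl c))"
proof -
  have "card (clauses_touching S (vbl c)) \<le> card (clauses_touching (C - {c}) (vbl c))"
    using assms(4,6) by (intro card_mono) (auto simp: clauses_touching_def)
  then have "x * (1 - x) ^ card (clauses_touching (C - {c}) (vbl c))
      \<le> x * (1 - x) ^ card (clauses_touching S (vbl c))"
    using assms(2,3) by (intro mult_left_mono power_decreasing) auto
  moreover have "1 / 2 ^ card (vbl c) \<le> x * (1 - x) ^ card (clauses_touching (C - {c}) (vbl c))"
    using assms(1,5) by (simp add: lll_condition_def)
  ultimately show ?thesis
    by linarith
qed

lemma card_sat_assignments_insert_ge:
  fixes x :: real
  assumes cnf: "cnf_formula V C" and x: "0 \<le> x" "x \<le> 1" and lll: "lll_condition C x"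
  shows "S \<subseteq> C \<Longrightarrow> c \<in> C - S \<Longrightarrow>
    (1 - x) * card (sat_assignments V S) \<le> card (sat_assignments V (insert c S))"
proof (induction "card S" arbitrary: S c rule: less_induct)
  case less
  have fin: "finite V" "finite S" and vbl_V: "\<forall>c'\<in>C. vbl c' \<subseteq> V"
    using cnf less.prems(1) finite_subset by (auto simp: cnf_formula_def)
  have step: "(1 - x) * card (sat_assignments V T) \<le> card (sat_assignments V (insert c' T))"
    if "T \<subseteq> S" "c' \<in> S - T" for T c'
  proof -
    have "card T < card S"
      using that fin(2) by (intro psubset_card_mono) auto
    then show ?thesis
      using less.hyps[of T c'] less.prems(1) that by auto
  qed
  let ?bad = "{\<sigma> \<in> sat_assignments V S. \<not> clause_sat \<sigma> c}"
  let ?n = "card (clauses_touching S (vbl c))"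
  have "1 / 2 ^ card (vbl c) \<le> x * (1 - x) ^ ?n"
    using cnf lll x less.prems by (intro lll_condition_touching_subset) (auto simp: cnf_formula_def)
  then have "1 \<le> 2 ^ card (vbl c) * (x * (1 - x) ^ ?n)"
    by (simp add: field_simps)
  then have "card ?bad \<le> card ?bad * (2 ^ card (vbl c) * (x * (1 - x) ^ ?n))"
    using mult_left_mono[of 1 _ "real (card ?bad)"] by simp
  also have "\<dots> = x * (card ?bad * 2 ^ card (vbl c) * (1 - x) ^ ?n)"
    by (simp add: algebra_simps)
  also have "\<dots> \<le> x * card (sat_assignments V S)"
    using fin vbl_V less.prems x step
    by (intro mult_left_mono card_falsifying_le_touching) auto
  finally show ?case
    using card_sat_assignments_insert_add[OF fin(1), of S c] by (simp add: algebra_simps)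
qed

lemma card_sat_assignments_ge:
  fixes x :: real
  assumes cnf: "cnf_formula V C" and x: "0 \<le> x" "x \<le> 1" and lll: "lll_condition C x"
  shows "(1 - x) ^ card C * 2 ^ card V \<le> card (sat_assignments V C)"
proof -
  have fin: "finite V" "finite C"
    using cnf by (auto simp: cnf_formula_def)
  have "(1 - x) ^ card C * card (sat_assignments V {}) \<le> card (sat_assignments V ({} \<union> C))"
    using fin x card_sat_assignments_insert_ge[OF cnf x lll]
    by (intro power_card_mult_le_union[where A = C]) auto
  moreover have "card (sat_assignments V {}) = 2 ^ card V"
    using fin by (simp add: sat_assignments_def card_PiE)
  ultimately show ?thesis
    by simp
qed

lemma prob_uniform_sat_mult_le:
  fixes x :: real
  assumes cnf: "cnf_formula V C" and x: "0 \<le> x" "x \<le> 1" and lll: "lll_condition C x"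
    and sat: "sat_assignments V C \<noteq> {}" and v: "v \<in> V"
  shows "measure_pmf.prob (uniform_sat V C) {X. X v = b} * 2 * (1 - x) ^ card {c \<in> C. v \<in> vbl c}
    \<le> 1"
proof -
  have fin: "finite V" "finite C" and vbl_V: "\<forall>c\<in>C. vbl c \<subseteq> V"
    using cnf by (auto simp: cnf_formula_def)
  define c_v where "c_v = {(v, \<not> b)}"
  have vbl_c_v: "vbl c_v = {v}"
    by (simp add: c_v_def vbl_def)
  have "clauses_touching C (vbl c_v) = {c \<in> C. v \<in> vbl c}"
    by (auto simp: clauses_touching_def vbl_c_v)
  moreover have "{\<sigma> \<in> sat_assignments V C. \<not> clause_sat \<sigma> c_v} = sat_assignments V C \<inter> {X. X v = b}"
    by (auto simp: c_v_def clause_sat_def)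
  moreover have "card {\<sigma> \<in> sat_assignments V C. \<not> clause_sat \<sigma> c_v} * 2 ^ card (vbl c_v)
      * (1 - x) ^ card (clauses_touching C (vbl c_v)) \<le> card (sat_assignments V C)"
    using fin vbl_V v x card_sat_assignments_insert_ge[OF cnf x lll]
    by (intro card_falsifying_le_touching) (auto simp: vbl_c_v)
  ultimately have bound: "card (sat_assignments V C \<inter> {X. X v = b}) * 2
      * (1 - x) ^ card {c \<in> C. v \<in> vbl c} \<le> card (sat_assignments V C)"
    by (simp add: vbl_c_v)
  have "measure_pmf.prob (uniform_sat V C) {X. X v = b} * 2 * (1 - x) ^ card {c \<in> C. v \<in> vbl c}
      = card (sat_assignments V C \<inter> {X. X v = b}) * 2 * (1 - x) ^ card {c \<in> C. v \<in> vbl c}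
        / card (sat_assignments V C)"
    using fin sat by (simp add: uniform_sat_def measure_pmf_of_set finite_sat_assignments)
  also have "\<dots> \<le> 1"
    using bound by (auto simp: divide_le_eq_1)
  finally show ?thesis .
qed

lemma exp_minus_two_mult_le_one_minus:
  fixes x :: real
  assumes "0 \<le> x" "x \<le> 1 / 2"
  shows "exp (- 2 * x) \<le> 1 - x"
proof -
  have "x * (2 * x) \<le> x * 1"
    using assms by (intro mult_left_mono) auto
  then have "- 2 * x \<le> - x - 2 * x\<^sup>2"
    by (simp add: power2_eq_square)
  also have "\<dots> \<le> ln (1 - x)"
    using assms by (rule ln_one_minus_pos_lower_bound)
  finally have "exp (- 2 * x) \<le> exp (ln (1 - x))"
    by simp
  also have "\<dots> = 1 - x"
    using assms by simp
  finally show ?thesis .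
qed

lemma lll_weight_inequality:
  fixes d k1 k2 k :: nat and s :: real
  assumes d: "1 \<le> d" and s: "1 \<le> s" "real k2 \<le> s" and k1: "2 * exp 1 * real d * s \<le> 2 ^ k1"
    and k: "k1 \<le> k"
  shows "1 / 2 ^ k \<le> 1 / (2 * real d * s) * (1 - 1 / (2 * real d * s)) ^ (k2 * (d - 1))"
proof -
  define x where "x = 1 / (2 * real d * s)"
  have ds: "1 \<le> real d * s"
    using mult_mono[of 1 "real d" 1 s] d s by simp
  have x: "0 < x" "x \<le> 1 / 2"
    using ds by (auto simp: x_def field_simps)
  have "4 \<le> 2 * exp (1 :: real)"
    using exp_ge_add_one_self[of "1 :: real"] by simp
  then have "4 * (real d * s) \<le> 2 * exp 1 * real d * s"
    using mult_right_mono[of 4 "2 * exp 1" "real d * s"] ds by (simp add: mult.assoc)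
  also have "\<dots> \<le> 2 ^ k1"
    by (fact k1)
  also have "\<dots> \<le> 2 ^ k"
    using k by (intro power_increasing) auto
  finally have "1 / 2 ^ k \<le> x / 2"
    using ds by (simp add: x_def field_simps)
  also have "\<dots> \<le> x * (1 - x) ^ (k2 * (d - 1))"
  proof -
    have "real (k2 * (d - 1)) \<le> s * real d"
      using s d by (simp add: of_nat_diff mult_mono)
    then have "real (k2 * (d - 1)) * x \<le> 1 / 2"
      using ds by (simp add: x_def field_simps)
    moreover have "1 + real (k2 * (d - 1)) * (- x) \<le> (1 + (- x)) ^ (k2 * (d - 1))"
      using x by (intro Bernoulli_inequality) auto
    ultimately have "1 / 2 \<le> (1 - x) ^ (k2 * (d - 1))"
      by simp
    then show ?thesis
      using x by (simp add: field_simps)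
  qed
  finally show ?thesis
    by (simp add: x_def)
qed

lemma card_clauses_touching_le:
  assumes "finite C" "c \<in> C" "finite (vbl c)"
    and deg: "\<forall>v\<in>vbl c. card {c' \<in> C. v \<in> vbl c'} \<le> d"
  shows "card (clauses_touching (C - {c}) (vbl c)) \<le> card (vbl c) * (d - 1)"
proof -
  have touching_eq:
    "clauses_touching (C - {c}) (vbl c) = (\<Union>v\<in>vbl c. {c' \<in> C. v \<in> vbl c'} - {c})"
    by (auto simp: clauses_touching_def)
  have "card (clauses_touching (C - {c}) (vbl c))
      \<le> (\<Sum>v\<in>vbl c. card ({c' \<in> C. v \<in> vbl c'} - {c}))"
    unfolding touching_eq by (rule card_UN_le[OF assms(3)])
  also have "\<dots> \<le> (\<Sum>v\<in>vbl c. d - 1)"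
  proof (rule sum_mono)
    fix v assume "v \<in> vbl c"
    then show "card ({c' \<in> C. v \<in> vbl c'} - {c}) \<le> d - 1"
      using assms(1,2) deg by (simp add: card_Diff_singleton diff_le_mono)
  qed
  finally show ?thesis
    by simp
qed

lemma lll_condition_bounded_degree:
  fixes k1 k2 d :: nat and s :: real
  assumes cnf: "cnf_formula V C"
    and size: "\<forall>c\<in>C. k1 \<le> card (vbl c) \<and> card (vbl c) \<le> k2"
    and deg: "\<forall>v\<in>V. card {c \<in> C. v \<in> vbl c} \<le> d"
    and "1 \<le> d" "1 \<le> s" "real k2 \<le> s" "2 * exp 1 * real d * s \<le> 2 ^ k1"
  shows "lll_condition C (1 / (2 * real d * s))"
  unfolding lll_condition_def
proof
  fix c assume c: "c \<in> C"
  let ?x = "1 / (2 * real d * s)"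
  have "finite C" "finite (vbl c)" "vbl c \<subseteq> V"
    using cnf c by (auto simp: cnf_formula_def vbl_def)
  then have "card (clauses_touching (C - {c}) (vbl c)) \<le> card (vbl c) * (d - 1)"
    using c deg by (intro card_clauses_touching_le) auto
  also have "\<dots> \<le> k2 * (d - 1)"
    using c size by simp
  finally have touching_le: "card (clauses_touching (C - {c}) (vbl c)) \<le> k2 * (d - 1)" .
  have "0 \<le> 1 - ?x" "1 - ?x \<le> 1"
    using assms(4,5) mult_mono[of 1 "real d" 1 s] by (auto simp: field_simps)
  then have "?x * (1 - ?x) ^ (k2 * (d - 1))
      \<le> ?x * (1 - ?x) ^ card (clauses_touching (C - {c}) (vbl c))"
    using assms(4,5) touching_le by (intro mult_left_mono power_decreasing) auto
  moreover have "1 / 2 ^ card (vbl c) \<le> ?x * (1 - ?x) ^ (k2 * (d - 1))"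
    using assms(4-7) c size by (intro lll_weight_inequality) auto
  ultimately show "1 / 2 ^ card (vbl c) \<le> ?x * (1 - ?x) ^ card (clauses_touching (C - {c}) (vbl c))"
    by linarith
qed

lemma lll_weight_exists:
  fixes k1 k2 d :: nat and s :: real
  assumes cnf: "cnf_formula V C" and "1 \<le> k1"
    and size: "\<forall>c\<in>C. k1 \<le> card (vbl c) \<and> card (vbl c) \<le> k2"
    and deg: "\<forall>v\<in>V. card {c \<in> C. v \<in> vbl c} \<le> d"
    and "real k2 \<le> s" "2 * exp 1 * real d * s \<le> 2 ^ k1"
  shows "\<exists>x. 0 \<le> x \<and> x < 1 \<and> lll_condition C x \<and> exp (- 1 / s) \<le> (1 - x) ^ d"
proof (cases "C = {}")
  case True
  have "0 \<le> s"
    using assms(5) of_nat_0_le_iff order_trans by blast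
  then show ?thesis
    using True by (intro exI[of _ 0]) (simp add: lll_condition_def)
next
  case False
  then obtain c where c: "c \<in> C"
    by blast
  have "finite C" "finite (vbl c)" "vbl c \<subseteq> V"
    using cnf c by (auto simp: cnf_formula_def vbl_def)
  have "1 \<le> card (vbl c)"
    using assms(2) size c by (meson order_trans)
  then have "vbl c \<noteq> {}"
    by auto
  then obtain v where v: "v \<in> vbl c" "v \<in> V"
    using \<open>vbl c \<subseteq> V\<close> by blast
  have "1 \<le> card {c \<in> C. v \<in> vbl c}"
    using \<open>finite C\<close> c v by (auto simp: Suc_le_eq card_gt_0_iff)
  then have d: "1 \<le> d"
    using deg v by (meson order_trans)
  have s: "1 \<le> s"
    using \<open>1 \<le> card (vbl c)\<close> size c assms(5) by fastforce
  define x where "x = 1 / (2 * real d * s)"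
  have ds: "1 \<le> real d * s"
    using mult_mono[of 1 "real d" 1 s] d s by simp
  then have x: "0 \<le> x" "x \<le> 1 / 2"
    by (auto simp: x_def field_simps)
  have "exp (- 1 / s) = exp (- 2 * x) ^ d"
    using d s by (simp add: x_def flip: exp_of_nat_mult)
  also have "\<dots> \<le> (1 - x) ^ d"
    using x exp_minus_two_mult_le_one_minus by (intro power_mono) auto
  finally have "exp (- 1 / s) \<le> (1 - x) ^ d" .
  moreover have "lll_condition C x"
    unfolding x_def using cnf size deg d s assms(5,6) by (rule lll_condition_bounded_degree)
  ultimately show ?thesis
    using x by (intro exI[of _ x]) auto
qed

theorem corollary2p2:
  fixes V :: "'v set" and C :: "'v lit set set"
    and k1 k2 d :: nat and s :: real
  assumes "cnf_formula V C"
    and "1 \<le> k1"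
    and "\<forall>c\<in>C. k1 \<le> card (vbl c) \<and> card (vbl c) \<le> k2"
    and "\<forall>v\<in>V. card {c \<in> C. v \<in> vbl c} \<le> d"
    and "s \<ge> real k2"
    and "2 ^ k1 \<ge> 2 * exp 1 * real d * s"
  shows "sat_assignments V C \<noteq> {} \<and>
    (\<forall>v\<in>V. max (measure_pmf.prob (uniform_sat V C) {X. X v = False})
                 (measure_pmf.prob (uniform_sat V C) {X. X v = True})
             \<le> 1 / 2 * exp (1 / s))"
proof -
  obtain x where x: "0 \<le> x" "x < 1" and lll: "lll_condition C x"
    and exp_le: "exp (- 1 / s) \<le> (1 - x) ^ d"
    using lll_weight_exists[OF assms] by blast
  have "0 < (1 - x) ^ card C * 2 ^ card V"
    using x by simp
  also have "\<dots> \<le> card (sat_assignments V C)"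
    using x by (intro card_sat_assignments_ge[OF assms(1) _ _ lll]) auto
  finally have sat: "sat_assignments V C \<noteq> {}"
    by auto
  have "measure_pmf.prob (uniform_sat V C) {X. X v = b} \<le> 1 / 2 * exp (1 / s)"
    if v: "v \<in> V" for v b
  proof -
    have "exp (- 1 / s) \<le> (1 - x) ^ card {c \<in> C. v \<in> vbl c}"
      using exp_le power_decreasing[of _ d "1 - x"] assms(4) v x by force
    then have "measure_pmf.prob (uniform_sat V C) {X. X v = b} * 2 * exp (- 1 / s)
        \<le> measure_pmf.prob (uniform_sat V C) {X. X v = b} * 2 * (1 - x) ^ card {c \<in> C. v \<in> vbl c}"
      by (intro mult_left_mono) simp_all
    also have "\<dots> \<le> 1"
      using x by (intro prob_uniform_sat_mult_le[OF assms(1) _ _ lll sat v]) auto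
    finally show ?thesis
      by (simp add: exp_minus field_simps)
  qed
  then show ?thesis
    using sat by (blast intro: max.boundedI)
qed

end
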